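(* On $\mathbb{R}^3$ with coordinates $(x,y,z)$ (the isometry group $E(1,1)$ of the flat Lorentzian plane, with its left-invariant structure), consider the Lorentzian metric $$g_1 = -dz^2 + (e^z dx + e^{-z} dy)^2 + (e^z dx - e^{-z} dy)^2 .$$ Let $F_1 = \tfrac12\big(e^{-z}\partial_x + e^{z}\partial_y\big)$, $F_2 = \tfrac12\big(e^{-z}\partial_x - e^{z}\partial_y\big)$, $F_3 = \partial_z$. For arbitrary real constants $a,b,c$ let $$X = 4a\Big(x e^z F_1 + x e^z F_2 - \tfrac12 F_3\Big) + 4(1-a)\Big(y e^{-z} F_1 - y e^{-z} F_2 + \tfrac12 F_3\Big) + b\,(e^z F_1 + e^z F_2) + c\,(e^{-z} F_1 - e^{-z} F_2).$$ Then $$2\,\mathrm{Ric}[g_1] + L_X g_1 - 4\,g_1 = 0 ,$$ and, for every choice of $a,b,c$, there is no smooth function $f$ on $\mathbb{R}^3$ with $X = \nabla f$ (gradient with respect to $g_1$). Hence $g_1$ is a shrinking non-gradient Lorentzian Ricci soliton.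
   Context: For a pseudo-Riemannian metric $g$ on a manifold $M$, a vector field $X$ and a constant $\alpha$, $(M,g,X,\alpha)$ is a Ricci soliton structure if $2\,\mathrm{Ric}[g] + L_X g + \alpha g = 0$, where $L_X$ denotes the Lie derivative. The soliton is called shrinking, steady, or expanding according as $\alpha<0$, $\alpha=0$, or $\alpha>0$. It is called gradient if $X=\nabla f$ for some function $f$, and non-gradient if $X\neq \nabla f$ for every function $f$. *)

theory Defs
  imports "HOL-Analysis.Analysis"
begin

text \<open>Tensor fields are given by their components in the coordinate frame
  (d/dx, d/dy, d/dz): a metric is a matrix-valued function, a vector field
  a vector-valued function.\<close>

type_synonym pt = "real ^ 3"
type_synonym metric = "pt \<Rightarrow> real ^ 3 ^ 3"
type_synonym vfield = "pt \<Rightarrow> real ^ 3"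

definition xc :: "pt \<Rightarrow> real" where "xc p = p $ 1"
definition yc :: "pt \<Rightarrow> real" where "yc p = p $ 2"
definition zc :: "pt \<Rightarrow> real" where "zc p = p $ 3"

definition pd :: "3 \<Rightarrow> (pt \<Rightarrow> real) \<Rightarrow> pt \<Rightarrow> real" where
  "pd i F p = deriv (\<lambda>t. F (p + t *\<^sub>R axis i 1)) 0"

fun iter_pd :: "3 list \<Rightarrow> (pt \<Rightarrow> real) \<Rightarrow> pt \<Rightarrow> real" where
  "iter_pd [] F = F"
| "iter_pd (i # is) F = pd i (iter_pd is F)"

definition smooth :: "(pt \<Rightarrow> real) \<Rightarrow> bool" where
  "smooth F \<longleftrightarrow> (\<forall>is p. iter_pd is F differentiable (at p))"

definition tsq :: "real ^ 3 \<Rightarrow> real ^ 3 ^ 3" where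
  "tsq w = (\<chi> i j. w $ i * w $ j)"

definition ginv :: "metric \<Rightarrow> pt \<Rightarrow> 3 \<Rightarrow> 3 \<Rightarrow> real" where
  "ginv g p i j = matrix_inv (g p) $ i $ j"

definition christoffel :: "metric \<Rightarrow> 3 \<Rightarrow> 3 \<Rightarrow> 3 \<Rightarrow> pt \<Rightarrow> real" where
  "christoffel g k i j p =
     (\<Sum>l\<in>UNIV. ginv g p k l *
        (pd i (\<lambda>q. g q $ l $ j) p + pd j (\<lambda>q. g q $ i $ l) p - pd l (\<lambda>q. g q $ i $ j) p)) / 2"

definition ricci :: "metric \<Rightarrow> pt \<Rightarrow> real ^ 3 ^ 3" where
  "ricci g p = (\<chi> i j.
     (\<Sum>k\<in>UNIV. pd k (christoffel g k i j) p - pd j (christoffel g k i k) p)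
   + (\<Sum>k\<in>UNIV. \<Sum>l\<in>UNIV. christoffel g k k l p * christoffel g l i j p
                          - christoffel g k j l p * christoffel g l i k p))"

definition lie_metric :: "vfield \<Rightarrow> metric \<Rightarrow> pt \<Rightarrow> real ^ 3 ^ 3" where
  "lie_metric X g p = (\<chi> i j. \<Sum>k\<in>UNIV.
       X p $ k * pd k (\<lambda>q. g q $ i $ j) p
     + g p $ k $ j * pd i (\<lambda>q. X q $ k) p
     + g p $ i $ k * pd j (\<lambda>q. X q $ k) p)"

definition grad :: "metric \<Rightarrow> (pt \<Rightarrow> real) \<Rightarrow> vfield" where
  "grad g f p = (\<chi> i. \<Sum>j\<in>UNIV. ginv g p i j * pd j f p)"

definition dx :: "real ^ 3" where "dx = axis 1 1"
definition dy :: "real ^ 3" where "dy = axis 2 1"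
definition dz :: "real ^ 3" where "dz = axis 3 1"

definition g1 :: metric where
  "g1 p = - tsq dz
          + tsq (exp (zc p) *\<^sub>R dx + exp (- zc p) *\<^sub>R dy)
          + tsq (exp (zc p) *\<^sub>R dx - exp (- zc p) *\<^sub>R dy)"

definition Dx :: "real ^ 3" where "Dx = axis 1 1"
definition Dy :: "real ^ 3" where "Dy = axis 2 1"
definition Dz :: "real ^ 3" where "Dz = axis 3 1"

definition F1 :: vfield where "F1 p = (1/2) *\<^sub>R (exp (- zc p) *\<^sub>R Dx + exp (zc p) *\<^sub>R Dy)"
definition F2 :: vfield where "F2 p = (1/2) *\<^sub>R (exp (- zc p) *\<^sub>R Dx - exp (zc p) *\<^sub>R Dy)"
definition F3 :: vfield where "F3 p = Dz"

definition Xfield :: "real \<Rightarrow> real \<Rightarrow> real \<Rightarrow> vfield" where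
  "Xfield a b c p =
       (4 * a) *\<^sub>R ((xc p * exp (zc p)) *\<^sub>R F1 p + (xc p * exp (zc p)) *\<^sub>R F2 p - (1/2) *\<^sub>R F3 p)
     + (4 * (1 - a)) *\<^sub>R ((yc p * exp (- zc p)) *\<^sub>R F1 p - (yc p * exp (- zc p)) *\<^sub>R F2 p + (1/2) *\<^sub>R F3 p)
     + b *\<^sub>R (exp (zc p) *\<^sub>R F1 p + exp (zc p) *\<^sub>R F2 p)
     + c *\<^sub>R (exp (- zc p) *\<^sub>R F1 p - exp (- zc p) *\<^sub>R F2 p)"

end

theory Submission
  imports Defs
begin

(* The metric g1 is diagonal in the coordinate frame, with entries 2e^{2z}, 2e^{-2z}, -1,
   so every quantity in the soliton equation is an explicit function of the coordinates.
   We first show that all metric components and Christoffel symbols belong to the class of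
   "z-exponential" functions A + B e^{2z} + C e^{-2z}, a class closed under partial
   differentiation, while the components of X are affine in x and y.  The soliton
   identity then reduces to a finite coefficient computation.

   For the non-gradient part, X = grad f forces d_i f = (g1)_{ii} X^i.  Then d_z f is the
   constant 4a - 2, so f grows linearly along every z-line and its x- and y-derivatives
   are invariant under z-translations.  Comparing d_x f = 2e^{2z}(4ax + b) at z = 0 and
   z = 1 yields a = 0, while d_y f = 2e^{-2z}(4(1-a)y + c) yields a = 1: a contradiction. *)

lemma matrix_inv_eq:
  fixes A B :: "'a::semiring_1 ^'n^'n"
  assumes "A ** B = mat 1" "B ** A = mat 1"
  shows "matrix_inv A = B"
proof -
  have ex: "\<exists>A'. A ** A' = mat 1 \<and> A' ** A = mat 1" using assms by blast
  define C where "C = matrix_inv A"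
  have C: "A ** C = mat 1 \<and> C ** A = mat 1"
    unfolding C_def matrix_inv_def by (rule someI_ex[OF ex])
  have "C = C ** (A ** B)" using assms by (simp add: matrix_mul_rid)
  also have "\<dots> = (C ** A) ** B" by (simp add: matrix_mul_assoc)
  also have "\<dots> = B" using C by (simp add: matrix_mul_lid)
  finally show ?thesis unfolding C_def .
qed

lemma has_real_derivative_along_line:
  fixes f :: "'a::real_normed_vector \<Rightarrow> real"
  assumes "(f has_derivative f') (at (p + t *\<^sub>R v))"
  shows "((\<lambda>s. f (p + s *\<^sub>R v)) has_real_derivative f' v) (at t)"
proof -
  have "((\<lambda>s. p + s *\<^sub>R v) has_derivative (\<lambda>h. h *\<^sub>R v)) (at t)"
    by (auto intro!: derivative_eq_intros)
  from has_derivative_compose[OF this assms]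
  have "((\<lambda>s. f (p + s *\<^sub>R v)) has_derivative (\<lambda>h. f' (h *\<^sub>R v))) (at t)"
    by (simp add: o_def)
  moreover have "(\<lambda>h. f' (h *\<^sub>R v)) = (*) (f' v)"
    using linear_scale[OF has_derivative_linear[OF assms]] by (auto simp: mult.commute)
  ultimately show ?thesis unfolding has_field_derivative_def by simp
qed

lemma three_cases[case_names one two three]:
  fixes i :: 3
  obtains "i = 1" | "i = 2" | "i = 3"
  using exhaust_3[of i] by blast

lemma pt_axis: "(p + t *\<^sub>R axis m 1) $ k = p $ k + t * (if k = m then 1 else 0)"
  by (simp add: axis_def)

lemma pd_along_line:
  fixes f :: "pt \<Rightarrow> real"
  assumes "\<And>q. f differentiable (at q)"
  shows "((\<lambda>s. f (p + s *\<^sub>R axis m 1)) has_real_derivative pd m f (p + t *\<^sub>R axis m 1)) (at t)"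
proof -
  obtain f' where d: "(f has_derivative f') (at (p + t *\<^sub>R axis m 1))"
    using assms unfolding differentiable_def by blast
  have "((\<lambda>s. f ((p + t *\<^sub>R axis m 1) + s *\<^sub>R axis m 1)) has_real_derivative f' (axis m 1)) (at 0)"
    by (rule has_real_derivative_along_line) (use d in simp)
  then have "pd m f (p + t *\<^sub>R axis m 1) = f' (axis m 1)"
    unfolding pd_def by (rule DERIV_imp_deriv)
  with has_real_derivative_along_line[OF d] show ?thesis by simp
qed

lemma linear_along_line:
  fixes f :: "pt \<Rightarrow> real"
  assumes dif: "\<And>q. f differentiable (at q)" and const: "\<And>q. pd m f q = k"
  shows "f (p + t *\<^sub>R axis m 1) = f p + k * t"
proof -
  have "((\<lambda>s. f (p + s *\<^sub>R axis m 1) - k * s) has_real_derivative 0) (at s)" for s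
    using pd_along_line[OF dif, of p m s] const by (auto intro!: derivative_eq_intros)
  from DERIV_isconst_all[OF allI[OF this], of t 0] show ?thesis by simp
qed

text \<open>Under the same hypothesis, every partial derivative of \<open>f\<close> is invariant under
  translations in direction \<open>m\<close>: \<open>f\<close> and its translate differ by a constant.\<close>
lemma pd_translation_invariant:
  fixes f :: "pt \<Rightarrow> real"
  assumes dif: "\<And>q. f differentiable (at q)" and const: "\<And>q. pd m f q = k"
  shows "pd i f (p + t *\<^sub>R axis m 1) = pd i f p"
proof -
  have shifted: "f ((p + t *\<^sub>R axis m 1) + s *\<^sub>R axis i 1) = f (p + s *\<^sub>R axis i 1) + k * t" for s
  proof -
    have "(p + t *\<^sub>R axis m 1) + s *\<^sub>R axis i 1 = (p + s *\<^sub>R axis i 1) + t *\<^sub>R axis m 1"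
      by (simp add: algebra_simps)
    then show ?thesis by (simp only: linear_along_line[OF dif const])
  qed
  have "((\<lambda>s. f (p + s *\<^sub>R axis i 1) + k * t) has_real_derivative pd i f p) (at 0)"
    using pd_along_line[OF dif, of p i 0] by (auto intro!: derivative_eq_intros)
  then show ?thesis
    unfolding pd_def[of i f "p + t *\<^sub>R axis m 1"] shifted by (simp add: DERIV_imp_deriv pd_def)
qed

definition zexp :: "real \<Rightarrow> real \<Rightarrow> real \<Rightarrow> pt \<Rightarrow> real" where
  "zexp A B C q = A + B * exp (2 * zc q) + C * exp (-(2 * zc q))"

lemma pd_zexp: "pd m (zexp A B C) p = (if m = 3 then zexp 0 (2 * B) (- 2 * C) p else 0)"
proof -
  let ?s = "if (3::3) = m then 1 else (0::real)"
  have "((\<lambda>t. A + B * exp (2 * (p$3 + t * ?s)) + C * exp (-(2 * (p$3 + t * ?s))))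
      has_real_derivative
        (B * (exp (2 * (p$3 + 0 * ?s)) * (2 * ?s)) + C * (exp (-(2 * (p$3 + 0 * ?s))) * (-(2 * ?s)))))
      (at 0)"
    by (auto intro!: derivative_eq_intros)
  then show ?thesis unfolding pd_def zexp_def zc_def pt_axis
    by (auto dest!: DERIV_imp_deriv simp: algebra_simps split: if_splits)
qed

definition affine_xy :: "real \<Rightarrow> real \<Rightarrow> real \<Rightarrow> pt \<Rightarrow> real" where
  "affine_xy A B C q = A * xc q + B * yc q + C"

lemma pd_affine_xy: "pd m (affine_xy A B C) p = (if m = 1 then A else if m = 2 then B else 0)"
proof -
  let ?s = "\<lambda>k. if (k::3) = m then 1 else (0::real)"
  have "((\<lambda>t. A * (p$1 + t * ?s 1) + B * (p$2 + t * ?s 2) + C) has_real_derivative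
     (A * ?s 1 + B * ?s 2)) (at 0)"
    by (auto intro!: derivative_eq_intros)
  then show ?thesis unfolding pd_def affine_xy_def xc_def yc_def pt_axis
    by (auto dest!: DERIV_imp_deriv split: if_splits)
qed

definition g1_diag :: "3 \<Rightarrow> real \<Rightarrow> real" where
  "g1_diag i z = (if i = 1 then 2 * exp (2*z) else if i = 2 then 2 * exp (-(2*z)) else -1)"

lemma g1_diag_nonzero: "g1_diag i z \<noteq> 0"
  by (simp add: g1_diag_def)

lemma g1_components: "g1 p $ i $ j = (if i = j then g1_diag i (zc p) else 0)"
  by (cases i rule: three_cases; cases j rule: three_cases)
    (simp_all add: g1_def tsq_def dx_def dy_def dz_def axis_def g1_diag_def algebra_simps
      flip: exp_add)

lemma ginv_g1: "ginv g1 p i j = (if i = j then 1 / g1_diag i (zc p) else 0)"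
proof -
  let ?D = "(\<chi> i j. if i = j then 1 / g1_diag i (zc p) else 0) :: real^3^3"
  have "g1 p ** ?D = mat 1" "?D ** g1 p = mat 1"
    by (simp_all add: vec_eq_iff matrix_matrix_mult_def mat_def g1_components sum_3 forall_3
        g1_diag_nonzero)
  then have "matrix_inv (g1 p) = ?D" by (rule matrix_inv_eq)
  then show ?thesis unfolding ginv_def by simp
qed

definition g1_c0 :: "3 \<Rightarrow> 3 \<Rightarrow> real" where "g1_c0 i j = (if i = j \<and> i = 3 then -1 else 0)"
definition g1_cp :: "3 \<Rightarrow> 3 \<Rightarrow> real" where "g1_cp i j = (if i = j \<and> i = 1 then 2 else 0)"
definition g1_cm :: "3 \<Rightarrow> 3 \<Rightarrow> real" where "g1_cm i j = (if i = j \<and> i = 2 then 2 else 0)"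

lemma g1_zexp: "(\<lambda>q. g1 q $ i $ j) = zexp (g1_c0 i j) (g1_cp i j) (g1_cm i j)"
  by (rule ext, cases i rule: three_cases; cases j rule: three_cases)
    (simp_all add: zexp_def g1_components g1_diag_def g1_c0_def g1_cp_def g1_cm_def)

text \<open>The nonzero Christoffel symbols are Gamma^x_{xz} = 1, Gamma^y_{yz} = -1,
  Gamma^z_{xx} = 2e^{2z} and Gamma^z_{yy} = -2e^{-2z}.\<close>
definition chr_c0 :: "3 \<Rightarrow> 3 \<Rightarrow> 3 \<Rightarrow> real" where
  "chr_c0 k i j = (if k = 1 \<and> (i = 1 \<and> j = 3 \<or> i = 3 \<and> j = 1) then 1
     else if k = 2 \<and> (i = 2 \<and> j = 3 \<or> i = 3 \<and> j = 2) then -1 else 0)"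
definition chr_cp :: "3 \<Rightarrow> 3 \<Rightarrow> 3 \<Rightarrow> real" where
  "chr_cp k i j = (if k = 3 \<and> i = 1 \<and> j = 1 then 2 else 0)"
definition chr_cm :: "3 \<Rightarrow> 3 \<Rightarrow> 3 \<Rightarrow> real" where
  "chr_cm k i j = (if k = 3 \<and> i = 2 \<and> j = 2 then -2 else 0)"

lemma christoffel_g1: "christoffel g1 k i j = zexp (chr_c0 k i j) (chr_cp k i j) (chr_cm k i j)"
  apply (rule ext)
  apply (simp only: christoffel_def g1_zexp pd_zexp ginv_g1 sum_3)
  apply (cases k rule: three_cases; cases i rule: three_cases; cases j rule: three_cases)
  apply (simp_all add: zexp_def g1_diag_def g1_c0_def g1_cp_def g1_cm_def
      chr_c0_def chr_cp_def chr_cm_def field_simps exp_minus)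
  done

text \<open>In coordinates, X = (4ax + b) d_x + (4(1-a)y + c) d_y + (2 - 4a) d_z.\<close>
definition X_cx :: "real \<Rightarrow> 3 \<Rightarrow> real" where "X_cx a k = (if k = 1 then 4 * a else 0)"
definition X_cy :: "real \<Rightarrow> 3 \<Rightarrow> real" where "X_cy a k = (if k = 2 then 4 * (1 - a) else 0)"
definition X_c0 :: "real \<Rightarrow> real \<Rightarrow> real \<Rightarrow> 3 \<Rightarrow> real" where
  "X_c0 a b c k = (if k = 1 then b else if k = 2 then c else 2 - 4 * a)"

lemma Xfield_affine: "(\<lambda>q. Xfield a b c q $ k) = affine_xy (X_cx a k) (X_cy a k) (X_c0 a b c k)"
proof
  fix q
  show "Xfield a b c q $ k = affine_xy (X_cx a k) (X_cy a k) (X_c0 a b c k) q"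
    by (cases k rule: three_cases)
      (simp_all add: Xfield_def F1_def F2_def F3_def Dx_def Dy_def Dz_def axis_def affine_xy_def
        X_cx_def X_cy_def X_c0_def field_simps flip: exp_add)
qed

lemma Xfield_component: "Xfield a b c q $ k = affine_xy (X_cx a k) (X_cy a k) (X_c0 a b c k) q"
  by (simp add: Xfield_affine[symmetric])

lemma soliton_equation: "2 *\<^sub>R ricci g1 p + lie_metric (Xfield a b c) g1 p - 4 *\<^sub>R g1 p = 0"
  apply (simp only: vec_eq_iff forall_3 ricci_def lie_metric_def christoffel_g1 pd_zexp g1_zexp
      Xfield_affine pd_affine_xy)
  apply (simp add: sum_3 g1_components Xfield_component)
  apply (simp add: zexp_def affine_xy_def g1_diag_def g1_c0_def g1_cp_def g1_cm_def
      chr_c0_def chr_cp_def chr_cm_def X_cx_def X_cy_def X_c0_def field_simps exp_minus)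
  done

lemma pd_of_gradient_potential:
  assumes "\<And>p. Xfield a b c p = grad g1 f p"
  shows "pd i f q = g1_diag i (zc q) * Xfield a b c q $ i"
proof -
  have "Xfield a b c q $ i = pd i f q / g1_diag i (zc q)"
    unfolding assms grad_def by (cases i rule: three_cases) (simp_all add: sum_3 ginv_g1)
  then show ?thesis using g1_diag_nonzero[of i "zc q"] by (simp add: field_simps)
qed

definition point :: "real \<Rightarrow> real \<Rightarrow> real \<Rightarrow> pt" where
  "point x y z = x *\<^sub>R axis 1 1 + y *\<^sub>R axis 2 1 + z *\<^sub>R axis 3 1"

lemma point_coords: "xc (point x y z) = x" "yc (point x y z) = y" "zc (point x y z) = z"
  by (simp_all add: point_def xc_def yc_def zc_def axis_def)

lemma point_shift_z: "point x y z + t *\<^sub>R axis 3 1 = point x y (z + t)"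
  by (simp add: point_def algebra_simps)

lemma not_gradient: "\<not> (\<exists>f. smooth f \<and> (\<forall>p. Xfield a b c p = grad g1 f p))"
proof
  assume "\<exists>f. smooth f \<and> (\<forall>p. Xfield a b c p = grad g1 f p)"
  then obtain f where "smooth f" and X: "\<And>p. Xfield a b c p = grad g1 f p" by blast
  then have dif: "\<And>q. f differentiable (at q)" unfolding smooth_def by (metis iter_pd.simps(1))
  note pdf = pd_of_gradient_potential[OF X, unfolded Xfield_component affine_xy_def]
  have "pd 3 f q = 4 * a - 2" for q
    unfolding pdf by (simp add: g1_diag_def X_cx_def X_cy_def X_c0_def)
  note z_invariant = pd_translation_invariant[OF dif this]
  have x_part: "4 * a * x + b = 0" for x
  proof -
    have "2 * exp 2 * (4 * a * x + b) = 2 * (4 * a * x + b)"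
      using z_invariant[of 1 "point x 0 0" 1, unfolded point_shift_z]
      by (simp add: pdf point_coords g1_diag_def X_cx_def X_cy_def X_c0_def)
    then have "(exp 2 - 1) * (4 * a * x + b) = 0" by (simp add: algebra_simps)
    then show ?thesis by simp
  qed
  have y_part: "4 * (1 - a) * y + c = 0" for y
  proof -
    have "2 * exp (- 2) * (4 * (1 - a) * y + c) = 2 * (4 * (1 - a) * y + c)"
      using z_invariant[of 2 "point 0 y 0" 1, unfolded point_shift_z]
      by (simp add: pdf point_coords g1_diag_def X_cx_def X_cy_def X_c0_def)
    then have "(exp (- 2) - 1) * (4 * (1 - a) * y + c) = 0" by (simp add: algebra_simps)
    then show ?thesis by simp
  qed
  from x_part[of 0] x_part[of 1] y_part[of 0] y_part[of 1] show False by simp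
qed

theorem theorem5p1:
  fixes a b c :: real
  shows "(\<forall>p. 2 *\<^sub>R ricci g1 p + lie_metric (Xfield a b c) g1 p - 4 *\<^sub>R g1 p = 0)
       \<and> \<not> (\<exists>f. smooth f \<and> (\<forall>p. Xfield a b c p = grad g1 f p))"
  using soliton_equation not_gradient by blast

end
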